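(* Let $k\ge 2$ and let $G$ be a connected graph with vertex set $\{1,\ldots,n\}$, $n\ge 2$, such that for every $i=1,\ldots,n-1$ there are at most two edges $(u,v)$ of $G$ with $u\le i<v$, and such that exactly $k$ vertices of $G$ are separating with respect to this numbering. Then $G$ is a subgraph of some chain of $k-1$ cycles $Z_1,\ldots,Z_{k-1}$ with distinguished vertices $a_j,b_j$ in which $a_1=1$ and $b_{k-1}=n$.
   Context: For a graph with vertex set $\{1,\ldots,n\}$, a vertex $i$ is called separating if there is no edge $(u,v)$ of the graph with $u<i<v$; otherwise it is non-separating. A chain of $m$ cycles is a union of $m$ cycles $Z_1,\ldots,Z_m$ together with vertices $a_j,b_j\in Z_j$ ($j=1,\ldots,m$) such that $Z_i\cap Z_j=\emptyset$ whenever $|i-j|>1$, and $Z_{j-1}\cap Z_j=\{b_{j-1}\}=\{a_j\}$ for every $j=2,\ldots,m$. "Subgraph" means that $G$ is contained in the chain as a subgraph, with the vertex $1$ of $G$ equal to $a_1$ and the vertex $n$ of $G$ equal to $b_{k-1}$. *)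

theory Defs
  imports Main
begin

definition graph_on :: "nat \<Rightarrow> (nat \<Rightarrow> nat \<Rightarrow> bool) \<Rightarrow> bool" where
  "graph_on n E \<longleftrightarrow> (\<forall>u v. E u v \<longrightarrow> E v u) \<and> (\<forall>u. \<not> E u u)
      \<and> (\<forall>u v. E u v \<longrightarrow> u \<in> {1..n} \<and> v \<in> {1..n})"

definition connected_on :: "nat \<Rightarrow> (nat \<Rightarrow> nat \<Rightarrow> bool) \<Rightarrow> bool" where
  "connected_on n E \<longleftrightarrow> (\<forall>u\<in>{1..n}. \<forall>v\<in>{1..n}. (u, v) \<in> {(x, y). E x y}\<^sup>*)"

definition separating :: "(nat \<Rightarrow> nat \<Rightarrow> bool) \<Rightarrow> nat \<Rightarrow> bool" where
  "separating E i \<longleftrightarrow> \<not> (\<exists>u v. E u v \<and> u < i \<and> i < v)"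

text \<open>A cycle is given by a list of distinct vertices of length at least 3;
  consecutive vertices (cyclically) are adjacent.\<close>
definition is_cycle :: "'a list \<Rightarrow> bool" where
  "is_cycle c \<longleftrightarrow> distinct c \<and> length c \<ge> 3"

definition cycle_adj :: "'a list \<Rightarrow> 'a \<Rightarrow> 'a \<Rightarrow> bool" where
  "cycle_adj c u v \<longleftrightarrow> (\<exists>i<length c.
      (u = c ! i \<and> v = c ! ((i + 1) mod length c)) \<or>
      (v = c ! i \<and> u = c ! ((i + 1) mod length c)))"

text \<open>A chain of m cycles Z_0..Z_{m-1} (0-indexed) with distinguished vertices a_j, b_j.\<close>
definition chain_of_cycles ::
  "nat \<Rightarrow> 'a list list \<Rightarrow> (nat \<Rightarrow> 'a) \<Rightarrow> (nat \<Rightarrow> 'a) \<Rightarrow> bool" where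
  "chain_of_cycles m Z a b \<longleftrightarrow> length Z = m
     \<and> (\<forall>j<m. is_cycle (Z ! j) \<and> a j \<in> set (Z ! j) \<and> b j \<in> set (Z ! j))
     \<and> (\<forall>i<m. \<forall>j<m. (i + 1 < j \<or> j + 1 < i) \<longrightarrow> set (Z ! i) \<inter> set (Z ! j) = {})
     \<and> (\<forall>j. j + 1 < m \<longrightarrow> set (Z ! j) \<inter> set (Z ! (j + 1)) = {b j}
                         \<and> {b j} = {a (j + 1)})"

definition subgraph_of_chain ::
  "nat \<Rightarrow> (nat \<Rightarrow> nat \<Rightarrow> bool) \<Rightarrow> nat \<Rightarrow> 'a list list \<Rightarrow> (nat \<Rightarrow> 'a) \<Rightarrow> (nat \<Rightarrow> 'a) \<Rightarrow> bool" where
  "subgraph_of_chain n E m Z a b \<longleftrightarrow> (\<exists>f :: nat \<Rightarrow> 'a.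
      inj_on f {1..n} \<and> f 1 = a 0 \<and> f n = b (m - 1)
      \<and> (\<forall>u v. E u v \<longrightarrow> (\<exists>j<m. cycle_adj (Z ! j) (f u) (f v))))"

end

theory Submission
  imports Defs "HOL-Library.Sublist"
begin

text \<open>Consecutive separating vertices \<open>s < t\<close> cut the graph into blocks, and every edge lies
  inside a single block. Inside a block each gap between \<open>i\<close> and \<open>i + 1\<close> is crossed by one
  or two edges. Scanning \<open>s, s + 1, \<dots>, t - 1\<close> one maintains two paths starting at \<open>s\<close>,
  disjoint apart from \<open>s\<close>, which contain the scanned vertices and all edges among them and
  whose free ends are the left end points of all edges crossing the current gap; because at most
  two edges cross any gap, the next vertex can always be appended to one of the two ends. Joining
  both ends to \<open>t\<close> closes a cycle through the block (padded by an auxiliary vertex when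
  \<open>t = s + 1\<close>), and the cycles of consecutive blocks meet exactly in their common separating
  vertex.\<close>

section \<open>Paths and cycles\<close>

definition path_adj :: "'a list \<Rightarrow> 'a \<Rightarrow> 'a \<Rightarrow> bool" where
  "path_adj xs u v \<longleftrightarrow> sublist [u, v] xs \<or> sublist [v, u] xs"

lemma path_adj_sym: "path_adj xs u v \<longleftrightarrow> path_adj xs v u"
  unfolding path_adj_def by blast

lemma path_adj_sublist: "path_adj xs u v \<Longrightarrow> sublist xs ys \<Longrightarrow> path_adj ys u v"
  unfolding path_adj_def using sublist_order.order_trans by blast

lemma path_adj_rev [simp]: "path_adj (rev xs) u v \<longleftrightarrow> path_adj xs u v"
  unfolding path_adj_def by (auto simp: sublist_rev_right)

lemma path_adj_Cons_Cons: "path_adj (x # y # ys) x y"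
  unfolding path_adj_def using sublist_append_rightI[of "[x, y]" ys] by simp

lemma cycle_adj_sym: "cycle_adj c u v \<Longrightarrow> cycle_adj c v u"
  unfolding cycle_adj_def by blast

lemma cycle_adj_if_sublist:
  assumes "sublist [u, v] c" shows "cycle_adj c u v"
proof -
  obtain ps ss where c: "c = ps @ u # v # ss" using assms unfolding sublist_def by auto
  have "Suc (length ps) < length c" using c by simp
  moreover from this have "(length ps + 1) mod length c = Suc (length ps)" by simp
  moreover have "c ! length ps = u" "c ! Suc (length ps) = v"
    unfolding c by (simp_all add: nth_append)
  ultimately show ?thesis unfolding cycle_adj_def by (intro exI[of _ "length ps"]) auto
qed

lemma cycle_adj_if_path_adj:
  assumes "path_adj c u v" shows "cycle_adj c u v"
  using assms unfolding path_adj_def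
proof
  assume "sublist [v, u] c"
  then show ?thesis by (rule cycle_adj_sym[OF cycle_adj_if_sublist])
qed (rule cycle_adj_if_sublist)

lemma cycle_adj_last_hd: "c \<noteq> [] \<Longrightarrow> cycle_adj c (last c) (hd c)"
  unfolding cycle_adj_def
  by (rule exI[of _ "length c - 1"]) (simp add: last_conv_nth hd_conv_nth)

lemma cycle_through_two_paths:
  assumes A: "A \<noteq> []" "distinct A" and B: "B \<noteq> []" "distinct B"
    and AB: "last A = last B" "set A \<inter> set B = {last A}"
    and t: "t \<notin> set A \<union> set B" and d: "d \<notin> set A \<union> set B" "d \<noteq> t"
  obtains c where "is_cycle c" "set c \<subseteq> insert d (insert t (set A \<union> set B))"
    "t \<in> set c" "set A \<subseteq> set c"
    "\<And>u v. path_adj A u v \<or> path_adj B u v \<Longrightarrow> cycle_adj c u v"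
    "cycle_adj c t (hd A)" "cycle_adj c t (hd B)"
proof -
  \<comment> \<open>\<open>d\<close> is needed only when \<open>A = B = [s]\<close>, where \<open>t\<close> and \<open>s\<close> alone form no cycle.\<close>
  define c0 where "c0 = t # butlast A @ rev B"
  define c where "c = (if length c0 < 3 then c0 @ [d] else c0)"
  have B_split: "B = butlast B @ [last A]" using B(1) AB(1) by simp
  have c0_A: "c0 = t # A @ rev (butlast B)"
    unfolding c0_def using A(1) by (subst B_split) simp
  have A_c0: "sublist A c0" unfolding c0_A using sublist_appendI[of A "[t]"] by simp
  have B_c0: "sublist (rev B) c0"
    unfolding c0_def using sublist_append_leftI[of "rev B" "t # butlast A"] by simp
  have c0_c: "sublist c0 c" unfolding c_def by auto
  have "distinct (butlast B @ [last A])" using B(2) B_split by simp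
  then have butlast_B: "last A \<notin> set (butlast B)" "distinct (butlast B)" by simp_all
  have butlast_B_sub: "set (butlast B) \<subseteq> set B" by (auto dest: in_set_butlastD)
  have "set A \<inter> set (butlast B) = {}"
  proof -
    have "set A \<inter> set (butlast B) \<subseteq> set A \<inter> set B" using butlast_B_sub by blast
    then show ?thesis using AB(2) butlast_B(1) by auto
  qed
  then have "distinct c0" unfolding c0_A using A(2) butlast_B(2) butlast_B_sub t by auto
  then have "distinct c" unfolding c_def using d butlast_B_sub by (auto simp: c0_A)
  moreover have "length c \<ge> 3" unfolding c_def c0_A using A(1) by (auto simp: Suc_le_eq)
  ultimately have cyc: "is_cycle c" unfolding is_cycle_def by simp
  have set_c: "set c \<subseteq> insert d (insert t (set A \<union> set B))"
    unfolding c_def c0_A using butlast_B_sub by auto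
  have t_c: "t \<in> set c" and A_c: "set A \<subseteq> set c" unfolding c_def c0_A by auto
  have path: "cycle_adj c u v" if "path_adj A u v \<or> path_adj B u v" for u v
  proof -
    have "sublist A c" "sublist (rev B) c"
      using sublist_order.order_trans[OF A_c0 c0_c] sublist_order.order_trans[OF B_c0 c0_c] .
    then have "path_adj c u v"
      using that path_adj_sublist[of A u v c] path_adj_sublist[of "rev B" u v c] by auto
    then show ?thesis by (rule cycle_adj_if_path_adj)
  qed
  have hd_A: "cycle_adj c t (hd A)"
  proof -
    have "c = t # hd A # (tl A @ rev (butlast B) @ (if length c0 < 3 then [d] else []))"
      unfolding c_def c0_A using A(1) by simp
    then show ?thesis by (simp only:) (rule cycle_adj_if_path_adj[OF path_adj_Cons_Cons])
  qed
  have hd_B: "cycle_adj c t (hd B)"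
  proof (cases "length c0 < 3")
    case True
    then have "length A + length (butlast B) < 2" by (simp add: c0_A)
    moreover have "length A \<ge> 1" "length B \<ge> 1" using A(1) B(1) by (simp_all add: Suc_le_eq)
    ultimately have "length A = 1" "length B = 1" by simp_all
    then have "hd A = last A" "hd B = last B" by (auto simp: length_Suc_conv)
    then have "hd A = hd B" using AB(1) by simp
    then show ?thesis using hd_A by simp
  next
    case False
    then have "c \<noteq> []" "last c = hd B" "hd c = t"
      unfolding c_def c0_def using B(1) by (auto simp: last_rev)
    then show ?thesis using cycle_adj_sym[OF cycle_adj_last_hd[of c]] by simp
  qed
  show ?thesis by (rule that[OF cyc set_c t_c A_c path hd_A hd_B])
qed

section \<open>Graphs on \<open>{1..n}\<close> and their cuts\<close>

lemma graph_on_sym: "graph_on n E \<Longrightarrow> E u v \<Longrightarrow> E v u"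
  unfolding graph_on_def by blast

lemma graph_on_irrefl: "graph_on n E \<Longrightarrow> \<not> E u u"
  unfolding graph_on_def by blast

lemma graph_on_range: "graph_on n E \<Longrightarrow> E u v \<Longrightarrow> u \<in> {1..n} \<and> v \<in> {1..n}"
  unfolding graph_on_def by blast

lemma connected_on_neighbour:
  assumes "connected_on n E" "2 \<le> n" "i \<in> {1..n}"
  obtains w where "E i w"
proof -
  define w :: nat where "w = (if i = 1 then 2 else 1)"
  have "w \<in> {1..n}" "w \<noteq> i" unfolding w_def using assms(2) by auto
  moreover have "(i, w) \<in> {(x, y). E x y}\<^sup>*"
    using assms(1,3) \<open>w \<in> {1..n}\<close> unfolding connected_on_def by blast
  ultimately show thesis using that by (auto elim: converse_rtranclE)
qed

definition crossing :: "(nat \<Rightarrow> nat \<Rightarrow> bool) \<Rightarrow> nat \<Rightarrow> (nat \<times> nat) set" where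
  "crossing E i = {(u, v). E u v \<and> u \<le> i \<and> i < v}"

lemma mem_crossing_iff [simp]: "(u, v) \<in> crossing E i \<longleftrightarrow> E u v \<and> u \<le> i \<and> i < v"
  unfolding crossing_def by simp

locale cutwidth_two =
  fixes n :: nat and E :: "nat \<Rightarrow> nat \<Rightarrow> bool"
  assumes graph: "graph_on n E" and connected: "connected_on n E" and two_le_n: "2 \<le> n"
    and card_crossing: "\<And>i. i \<in> {1..n - 1} \<Longrightarrow> card (crossing E i) \<le> 2"
begin

lemma no_three_crossing_edges:
  assumes "i \<in> {1..n - 1}"
    and "(a, b) \<in> crossing E i" "(c, d) \<in> crossing E i" "(e, f) \<in> crossing E i"
    and "(a, b) \<noteq> (c, d)" "(a, b) \<noteq> (e, f)" "(c, d) \<noteq> (e, f)"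
  shows False
proof -
  have "crossing E i \<subseteq> {1..n} \<times> {1..n}"
    unfolding crossing_def using graph_on_range[OF graph] by blast
  then have "finite (crossing E i)" by (rule finite_subset) simp
  then have "card {(a, b), (c, d), (e, f)} \<le> card (crossing E i)"
    using assms(2-4) by (intro card_mono) auto
  then show False using card_crossing[OF assms(1)] assms(5-7) by simp
qed

end

section \<open>Two tracks through a block\<close>

definition at_most_one_beyond :: "(nat \<Rightarrow> nat \<Rightarrow> bool) \<Rightarrow> nat \<Rightarrow> nat \<Rightarrow> bool" where
  "at_most_one_beyond E i u \<longleftrightarrow> (\<forall>v w. E u v \<longrightarrow> E u w \<longrightarrow> i < v \<longrightarrow> i < w \<longrightarrow> v = w)"

lemma at_most_one_beyond_mono:
  "at_most_one_beyond E i u \<Longrightarrow> i \<le> j \<Longrightarrow> at_most_one_beyond E j u"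
  unfolding at_most_one_beyond_def by auto

text \<open>The paths \<open>A\<close> and \<open>B\<close> are stored from their free ends \<open>hd A\<close>, \<open>hd B\<close> back to \<open>s\<close>;
  they are the two arcs of the cycle being built over \<open>{s..i}\<close>. While the free ends
  coincide (initially both are \<open>s\<close>) the common end may carry two crossing edges.\<close>

definition two_tracks :: "(nat \<Rightarrow> nat \<Rightarrow> bool) \<Rightarrow> nat \<Rightarrow> nat \<Rightarrow> nat list \<Rightarrow> nat list \<Rightarrow> bool" where
  "two_tracks E s i A B \<longleftrightarrow>
     A \<noteq> [] \<and> B \<noteq> [] \<and> last A = s \<and> last B = s \<and> distinct A \<and> distinct B
     \<and> set A \<inter> set B = {s} \<and> set A \<union> set B = {s..i}
     \<and> (\<forall>u v. E u v \<longrightarrow> s \<le> u \<longrightarrow> u < v \<longrightarrow> v \<le> i \<longrightarrow> path_adj A u v \<or> path_adj B u v)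
     \<and> (\<forall>u v. (u, v) \<in> crossing E i \<longrightarrow> u = hd A \<or> u = hd B)
     \<and> (hd A \<noteq> hd B \<longrightarrow> at_most_one_beyond E i (hd A) \<and> at_most_one_beyond E i (hd B))"

lemma two_tracksD:
  assumes "two_tracks E s i A B"
  shows "A \<noteq> []" "B \<noteq> []" "last A = s" "last B = s" "distinct A" "distinct B"
    "set A \<inter> set B = {s}" "set A \<union> set B = {s..i}"
    "E u v \<Longrightarrow> s \<le> u \<Longrightarrow> u < v \<Longrightarrow> v \<le> i \<Longrightarrow> path_adj A u v \<or> path_adj B u v"
    "(u, v) \<in> crossing E i \<Longrightarrow> u = hd A \<or> u = hd B"
    "hd A \<noteq> hd B \<Longrightarrow> at_most_one_beyond E i (hd A)"
    "hd A \<noteq> hd B \<Longrightarrow> at_most_one_beyond E i (hd B)"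
  using assms unfolding two_tracks_def by blast+

lemma two_tracks_swap: "two_tracks E s i A B \<Longrightarrow> two_tracks E s i B A"
  unfolding two_tracks_def by (simp add: Int_commute Un_commute) blast

lemma two_tracks_hd: "two_tracks E s i A B \<Longrightarrow> hd A \<in> {s..i} \<and> hd B \<in> {s..i}"
  unfolding two_tracks_def by (metis UnI1 UnI2 list.set_sel(1))

locale separated_block = cutwidth_two +
  fixes s t :: nat
  assumes one_le_s: "1 \<le> s" and s_less_t: "s < t" and t_le_n: "t \<le> n"
    and separating_s: "separating E s"
    and inner_not_separating: "\<And>i. s < i \<Longrightarrow> i < t \<Longrightarrow> \<not> separating E i"
begin

lemma edge_over:
  assumes "s < i" "i < t"
  obtains x y where "E x y" "x < i" "i < y"
  using inner_not_separating[OF assms] unfolding separating_def by blast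

lemma cut_index: "s \<le> i \<Longrightarrow> i < t \<Longrightarrow> i \<in> {1..n - 1}"
  using one_le_s t_le_n by simp

lemma two_tracks_start: "two_tracks E s s [s] [s]"
  using separating_s unfolding two_tracks_def separating_def by (auto simp: le_less)

lemma two_tracks_extend:
  assumes tr: "two_tracks E s i A B" and si: "s \<le> i" and it: "Suc i < t"
    and back_edge: "\<And>u. E u (Suc i) \<Longrightarrow> u \<le> i \<Longrightarrow> u = hd A"
    and hd_A: "\<And>v. hd A \<noteq> hd B \<Longrightarrow> E (hd A) v \<Longrightarrow> Suc i < v \<Longrightarrow> False"
    and hd_B: "hd A = hd B \<Longrightarrow> at_most_one_beyond E (Suc i) (hd B)"
  shows "two_tracks E s (Suc i) (Suc i # A) B"
proof -
  note tr' = two_tracksD[OF tr]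
  have "Suc i \<notin> set A \<union> set B" using tr'(8) by simp
  then have new: "Suc i \<notin> set A" "Suc i \<notin> set B" by auto
  have "hd B \<in> set B" using tr'(2) by simp
  then have hd_B_new: "hd B \<noteq> Suc i" using new by auto
  have path: "path_adj (Suc i # A) u v \<or> path_adj B u v"
    if "E u v" "s \<le> u" "u < v" "v \<le> Suc i" for u v
  proof (cases "v \<le> i")
    case True
    have "sublist A (Suc i # A)"
      using sublist_append_leftI[of A "[Suc i]"] by (simp only: append.simps)
    then show ?thesis
      using tr'(9)[OF that(1-3) True] path_adj_sublist[of A u v "Suc i # A"] by blast
  next
    case False
    then have "v = Suc i" using that(4) by simp
    then have "u = hd A" using that(1,3) by (intro back_edge) simp_all
    moreover have "path_adj (Suc i # A) (Suc i) (hd A)"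
      using path_adj_Cons_Cons[of "Suc i" "hd A" "tl A"] tr'(1) by simp
    ultimately show ?thesis using \<open>v = Suc i\<close> path_adj_sym[of "Suc i # A" u v] by simp
  qed
  have cross: "u = Suc i \<or> u = hd B" if "(u, v) \<in> crossing E (Suc i)" for u v
  proof (cases "u = Suc i")
    case False
    then have "(u, v) \<in> crossing E i" using that by simp
    then have "u = hd A \<or> u = hd B" by (rule tr'(10))
    then show ?thesis using hd_A that by auto
  qed simp
  \<comment> \<open>An edge jumping over the non-separating vertex \<open>Suc i\<close> crosses both cuts \<open>i\<close> and \<open>Suc i\<close>.\<close>
  obtain x y where xy: "E x y" "x < Suc i" "Suc i < y"
    using edge_over[of "Suc i"] si it by auto
  have one_new: "at_most_one_beyond E (Suc i) (Suc i)"
    unfolding at_most_one_beyond_def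
  proof (intro allI impI)
    fix v w assume "E (Suc i) v" "E (Suc i) w" "Suc i < v" "Suc i < w"
    moreover have "Suc i \<in> {1..n - 1}" using cut_index si it by simp
    ultimately show "v = w"
      using no_three_crossing_edges[of "Suc i" "Suc i" v "Suc i" w x y] xy by auto
  qed
  have one_B: "at_most_one_beyond E (Suc i) (hd B)"
    using hd_B tr'(12) at_most_one_beyond_mono[of E i "hd B" "Suc i"] by auto
  have "set (Suc i # A) \<inter> set B = {s}" using tr'(7) new by auto
  moreover have "set (Suc i # A) \<union> set B = {s..Suc i}" using tr'(8) si by auto
  ultimately show ?thesis
    unfolding two_tracks_def using tr'(1-6) new(1) hd_B_new path cross one_new one_B
    by (auto simp del: mem_crossing_iff)
qed

lemma forward_neighbour:
  assumes "s \<le> i" "Suc i < t" and no_back: "\<not> (\<exists>u\<le>i. E u (Suc i))"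
  obtains w where "E (Suc i) w" "Suc i < w"
proof -
  obtain w where w: "E (Suc i) w"
    using connected_on_neighbour[OF connected two_le_n, of "Suc i"] assms(1,2) one_le_s t_le_n
    by auto
  have "w \<noteq> Suc i" using graph_on_irrefl[OF graph] w by blast
  moreover have "\<not> w \<le> i" using no_back graph_on_sym[OF graph w] by blast
  ultimately show thesis using that w by simp
qed

lemma two_tracks_extend_at_neighbour:
  assumes tr: "two_tracks E s i A B" and si: "s \<le> i" and it: "Suc i < t"
    and nbr: "E (hd A) (Suc i)"
  shows "two_tracks E s (Suc i) (Suc i # A) B"
proof -
  note tr' = two_tracksD[OF tr]
  have i: "i \<in> {1..n - 1}" using cut_index si it by simp
  have hd: "hd A \<le> i" "hd B \<le> i" using two_tracks_hd[OF tr] by auto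
  obtain x y where xy: "E x y" "x < Suc i" "Suc i < y" using edge_over[of "Suc i"] si it by auto
  show ?thesis
  proof (rule two_tracks_extend[OF tr si it])
    fix u assume u: "E u (Suc i)" "u \<le> i"
    show "u = hd A"
    proof (rule ccontr)
      assume "u \<noteq> hd A"
      then show False
        using no_three_crossing_edges[OF i, of "hd A" "Suc i" u "Suc i" x y] nbr u xy hd by auto
    qed
  next
    fix v assume "hd A \<noteq> hd B" "E (hd A) v" "Suc i < v"
    then show False
      using tr'(11) nbr unfolding at_most_one_beyond_def by (metis Suc_lessD lessI less_not_refl)
  next
    assume "hd A = hd B"
    then show "at_most_one_beyond E (Suc i) (hd B)"
      unfolding at_most_one_beyond_def
      using no_three_crossing_edges[OF i, of "hd A" "Suc i" "hd B"] nbr hd by force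
  qed
qed

lemma two_tracks_extend_free:
  assumes tr: "two_tracks E s i A B" and si: "s \<le> i" and it: "Suc i < t"
    and no_back: "\<not> (\<exists>u\<le>i. E u (Suc i))"
    and free: "hd A = hd B \<or> (\<forall>v. E (hd A) v \<longrightarrow> v \<le> i)"
  shows "two_tracks E s (Suc i) (Suc i # A) B"
proof (rule two_tracks_extend[OF tr si it])
  obtain w where w: "E (Suc i) w" "Suc i < w" using forward_neighbour si it no_back by blast
  have i: "Suc i \<in> {1..n - 1}" using cut_index si it by simp
  have hd: "hd B \<le> i" using two_tracks_hd[OF tr] by auto
  assume "hd A = hd B"
  then show "at_most_one_beyond E (Suc i) (hd B)"
    unfolding at_most_one_beyond_def
    using no_three_crossing_edges[OF i, of "Suc i" w "hd B"] w hd by force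
qed (use no_back free in auto)

lemma two_tracks_step:
  assumes tr: "two_tracks E s i A B" and si: "s \<le> i" and it: "Suc i < t"
  shows "\<exists>A' B'. two_tracks E s (Suc i) A' B'"
proof (cases "\<exists>u\<le>i. E u (Suc i)")
  case True
  then obtain u where u: "u \<le> i" "E u (Suc i)" by blast
  then have "u = hd A \<or> u = hd B" using two_tracksD(10)[OF tr, of u "Suc i"] by simp
  then show ?thesis
  proof
    assume "u = hd A"
    then show ?thesis using two_tracks_extend_at_neighbour[OF tr si it] u by blast
  next
    assume "u = hd B"
    then have "two_tracks E s (Suc i) (Suc i # B) A"
      using two_tracks_extend_at_neighbour[OF two_tracks_swap[OF tr] si it] u by blast
    then show ?thesis by (blast dest: two_tracks_swap)
  qed
next
  case False
  show ?thesis
  proof (cases "hd A = hd B \<or> (\<forall>v. E (hd A) v \<longrightarrow> v \<le> i)")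
    case True
    then show ?thesis using two_tracks_extend_free[OF tr si it False] by blast
  next
    case busy_A: False
    show ?thesis
    proof (cases "\<forall>v. E (hd B) v \<longrightarrow> v \<le> i")
      case True
      then have "two_tracks E s (Suc i) (Suc i # B) A"
        using two_tracks_extend_free[OF two_tracks_swap[OF tr] si it False] by blast
      then show ?thesis by (blast dest: two_tracks_swap)
    next
      case busy_B: False
      obtain v1 v2 where v: "E (hd A) v1" "i < v1" "E (hd B) v2" "i < v2"
        using busy_A busy_B by (meson not_le)
      have hd: "hd A \<le> i" "hd B \<le> i" using two_tracks_hd[OF tr] by auto
      then have "Suc i < v1" "Suc i < v2" using v False by (metis Suc_lessI)+
      moreover obtain w where "E (Suc i) w" "Suc i < w" using forward_neighbour si it False by blast
      moreover have "Suc i \<in> {1..n - 1}" using cut_index si it by simp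
      ultimately show ?thesis
        using no_three_crossing_edges[of "Suc i" "hd A" v1 "hd B" v2 "Suc i" w] v hd busy_A
        by auto
    qed
  qed
qed

lemma two_tracks_exist: "s \<le> i \<Longrightarrow> i < t \<Longrightarrow> \<exists>A B. two_tracks E s i A B"
proof (induction i rule: nat_induct_at_least)
  case base
  then show ?case using two_tracks_start by blast
next
  case (Suc i)
  then obtain A B where "two_tracks E s i A B" by auto
  then show ?case using two_tracks_step Suc.hyps Suc.prems by blast
qed

lemma block_cycle:
  assumes "t < d"
  obtains c where "is_cycle c" "set c \<subseteq> {s..t} \<union> {d}" "s \<in> set c" "t \<in> set c"
    "\<And>u v. E u v \<Longrightarrow> u \<in> {s..t} \<Longrightarrow> v \<in> {s..t} \<Longrightarrow> cycle_adj c u v"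
proof -
  have "s \<le> t - 1" "t - 1 < t" using s_less_t by auto
  then obtain A B where tr: "two_tracks E s (t - 1) A B" using two_tracks_exist by blast
  note tr' = two_tracksD[OF tr]
  have AB: "last A = last B" "set A \<inter> set B = {last A}" using tr'(3,4,7) by simp_all
  have td: "t \<notin> set A \<union> set B" "d \<notin> set A \<union> set B" "d \<noteq> t" using tr'(8) assms s_less_t by auto
  obtain c where c: "is_cycle c" "set c \<subseteq> insert d (insert t (set A \<union> set B))"
    "t \<in> set c" "set A \<subseteq> set c"
    "\<And>u v. path_adj A u v \<or> path_adj B u v \<Longrightarrow> cycle_adj c u v"
    "cycle_adj c t (hd A)" "cycle_adj c t (hd B)"
    by (rule cycle_through_two_paths[OF tr'(1,5,2,6) AB td]) iprover
  have forward: "cycle_adj c u v" if "E u v" "s \<le> u" "u < v" "v \<le> t" for u v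
  proof (cases "v = t")
    case True
    then have "u = hd A \<or> u = hd B" using tr'(10)[of u v] that by simp
    then show ?thesis using cycle_adj_sym[OF c(6)] cycle_adj_sym[OF c(7)] True by blast
  next
    case False
    then show ?thesis using tr'(9)[of u v] that c(5) by simp
  qed
  have "cycle_adj c u v" if "E u v" "u \<in> {s..t}" "v \<in> {s..t}" for u v
  proof (cases "u < v")
    case True
    then show ?thesis using forward that by simp
  next
    case False
    then have "v < u" using graph_on_irrefl[OF graph] that(1) by (cases "u = v") auto
    then have "cycle_adj c v u" using forward[of v u] graph_on_sym[OF graph that(1)] that by simp
    then show ?thesis by (rule cycle_adj_sym)
  qed
  moreover have "set c \<subseteq> {s..t} \<union> {d}" using c(2) tr'(8) s_less_t by auto
  moreover have "s \<in> set c" using c(4) tr'(1,3) by auto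
  ultimately show thesis using that c(1,3) by blast
qed

end

section \<open>Chaining the blocks\<close>

lemma segment_containing:
  fixes f :: "nat \<Rightarrow> nat"
  shows "f 0 \<le> u \<Longrightarrow> u < f m \<Longrightarrow> \<exists>j<m. f j \<le> u \<and> u < f (Suc j)"
proof (induction m)
  case (Suc m)
  show ?case
  proof (cases "u < f m")
    case True
    then show ?thesis using Suc by (meson less_SucI)
  next
    case False
    then show ?thesis using Suc.prems by (intro exI[of _ m]) simp
  qed
qed simp

lemma strict_mono_enumeration:
  fixes S :: "nat set"
  assumes "finite S" "card S = Suc m"
  obtains f where "strict_mono_on {..m} f" "f ` {..m} = S"
proof
  let ?xs = "sorted_list_of_set S"
  have len: "length ?xs = Suc m" using assms by simp
  show "strict_mono_on {..m} ((!) ?xs)"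
  proof (rule strict_mono_onI)
    fix r s assume "r \<in> {..m}" "s \<in> {..m}" "r < s"
    then show "?xs ! r < ?xs ! s"
      using sorted_wrt_nth_less[OF strict_sorted_list_of_set, of r s S] len by simp
  qed
  have "{..m} = {0..<length ?xs}" using len by auto
  then show "(!) ?xs ` {..m} = S" using nth_image[of "length ?xs" ?xs] assms(1) by simp
qed

lemma separating_enumeration:
  assumes graph: "graph_on n E" and "1 \<le> n"
    and card: "card {i \<in> {1..n}. separating E i} = Suc m"
  obtains f where "strict_mono_on {..m} f" "f 0 = 1" "f m = n"
    "\<And>j. j \<le> m \<Longrightarrow> separating E (f j)"
    "\<And>j i. j < m \<Longrightarrow> f j < i \<Longrightarrow> i < f (Suc j) \<Longrightarrow> \<not> separating E i"
proof -
  define S where "S = {i \<in> {1..n}. separating E i}"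
  obtain f where mono: "strict_mono_on {..m} f" and img: "f ` {..m} = S"
    using strict_mono_enumeration[of S m] card unfolding S_def by auto
  have less_iff: "f i < f j \<longleftrightarrow> i < j" if "i \<le> m" "j \<le> m" for i j
    using strict_mono_on_less[OF mono] that by simp
  have "separating E 1" "separating E n"
    using graph_on_range[OF graph] unfolding separating_def by fastforce+
  then have "1 \<in> f ` {..m}" "n \<in> f ` {..m}" using img \<open>1 \<le> n\<close> unfolding S_def by auto
  then obtain p q where pq: "p \<le> m" "f p = 1" "q \<le> m" "f q = n" by (metis atMost_iff imageE)
  have range: "f j \<in> {1..n}" "separating E (f j)" if "j \<le> m" for j
    using img that unfolding S_def by auto
  have "f 0 = 1" using range(1)[of 0] less_iff[of p 0] pq by (cases "p = 0") auto
  moreover have "f m = n" using range(1)[of m] less_iff[of m q] pq by (cases "q = m") auto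
  moreover have "\<not> separating E i" if "j < m" "f j < i" "i < f (Suc j)" for j i
  proof
    assume "separating E i"
    then have "i \<in> f ` {..m}" using img range(1)[of "Suc j"] that unfolding S_def by auto
    then obtain r where "r \<le> m" "i = f r" by auto
    then show False using less_iff[of j r] less_iff[of r "Suc j"] that by auto
  qed
  ultimately show thesis using that mono range(2) by blast
qed

lemma chain_of_block_cycles:
  fixes f :: "nat \<Rightarrow> nat"
  assumes mono: "strict_mono_on {..m} f" and below: "f m < N"
    and cyc: "\<And>j. j < m \<Longrightarrow> is_cycle (c j) \<and> f j \<in> set (c j) \<and> f (Suc j) \<in> set (c j)
                     \<and> set (c j) \<subseteq> {f j..f (Suc j)} \<union> {N + j}"
  shows "chain_of_cycles m (map c [0..<m]) f (f \<circ> Suc)"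
proof -
  have le_iff: "f i \<le> f j \<longleftrightarrow> i \<le> j" if "i \<le> m" "j \<le> m" for i j
    using strict_mono_on_less_eq[OF mono] that by simp
  have vertex: "x \<in> {f j..f (Suc j)} \<and> x < N \<or> x = N + j" if "j < m" "x \<in> set (c j)" for j x
  proof -
    have "f (Suc j) < N" using le_iff[of "Suc j" m] below that(1) by simp
    then show ?thesis using cyc[OF that(1)] that(2) by auto
  qed
  have far: "set (c i) \<inter> set (c j) = {}" if "i + 1 < j" "j < m" for i j
  proof -
    have "f (Suc i) < f j" using le_iff[of j "Suc i"] that by simp
    then have "x \<notin> set (c j)" if "x \<in> set (c i)" for x
      using vertex[of i x] vertex[of j x] \<open>i + 1 < j\<close> \<open>j < m\<close> that by auto
    then show ?thesis by blast
  qed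
  have near: "set (c j) \<inter> set (c (Suc j)) = {f (Suc j)}" if "Suc j < m" for j
  proof -
    have "x = f (Suc j)" if "x \<in> set (c j)" "x \<in> set (c (Suc j))" for x
      using vertex[of j x] vertex[of "Suc j" x] \<open>Suc j < m\<close> that by auto
    then show ?thesis using cyc[of j] cyc[of "Suc j"] that by auto
  qed
  have "set (c i) \<inter> set (c j) = {}" if "i < m" "j < m" "i + 1 < j \<or> j + 1 < i" for i j
    using far[of i j] far[of j i] that by (auto simp: Int_commute)
  then show ?thesis
    unfolding chain_of_cycles_def using cyc near by simp
qed

lemma subgraph_of_block_cycles:
  fixes f :: "nat \<Rightarrow> nat"
  assumes graph: "graph_on n E" and mono: "strict_mono_on {..m} f"
    and "0 < m" "f 0 = 1" "f m = n"
    and sep: "\<And>j. j \<le> m \<Longrightarrow> separating E (f j)"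
    and adj: "\<And>j u v. j < m \<Longrightarrow> E u v \<Longrightarrow> u \<in> {f j..f (Suc j)} \<Longrightarrow> v \<in> {f j..f (Suc j)}
                \<Longrightarrow> cycle_adj (c j) u v"
  shows "subgraph_of_chain n E m (map c [0..<m]) f (f \<circ> Suc)"
proof -
  have forward: "\<exists>j<m. cycle_adj (c j) u v" if "E u v" "u < v" for u v
  proof -
    have "f 0 \<le> u" "u < f m" using graph_on_range[OF graph that(1)] that(2) assms(4,5) by auto
    then obtain j where j: "j < m" "f j \<le> u" "u < f (Suc j)" using segment_containing by blast
    have "v \<le> f (Suc j)" using sep[of "Suc j"] j that unfolding separating_def by force
    then show ?thesis using adj[OF j(1) that(1)] j that(2) by auto
  qed
  have "\<exists>j<m. cycle_adj (map c [0..<m] ! j) u v" if e: "E u v" for u v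
  proof -
    have "\<exists>j<m. cycle_adj (c j) u v"
    proof (cases "u < v")
      case True
      then show ?thesis using forward e by blast
    next
      case False
      then have "v < u" using graph_on_irrefl[OF graph] e by (cases "u = v") auto
      then obtain j where "j < m" "cycle_adj (c j) v u"
        using forward graph_on_sym[OF graph e] by blast
      then show ?thesis using cycle_adj_sym[of "c j" v u] by blast
    qed
    then obtain j where "j < m" "cycle_adj (c j) u v" by blast
    then show ?thesis by (intro exI[of _ j]) simp
  qed
  then show ?thesis
    unfolding subgraph_of_chain_def using assms(3-5) by (intro exI[of _ id]) simp
qed

context cutwidth_two
begin

lemma block_cycles:
  assumes mono: "strict_mono_on {..m} f" and ends: "f 0 = 1" "f m = n"
    and sep: "\<And>j. j \<le> m \<Longrightarrow> separating E (f j)"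
    and inner: "\<And>j i. j < m \<Longrightarrow> f j < i \<Longrightarrow> i < f (Suc j) \<Longrightarrow> \<not> separating E i"
  obtains c where
    "\<And>j. j < m \<Longrightarrow> is_cycle (c j) \<and> f j \<in> set (c j) \<and> f (Suc j) \<in> set (c j)
           \<and> set (c j) \<subseteq> {f j..f (Suc j)} \<union> {Suc n + j}"
    "\<And>j u v. j < m \<Longrightarrow> E u v \<Longrightarrow> u \<in> {f j..f (Suc j)} \<Longrightarrow> v \<in> {f j..f (Suc j)}
           \<Longrightarrow> cycle_adj (c j) u v"
proof -
  have le_iff: "f i \<le> f j \<longleftrightarrow> i \<le> j" if "i \<le> m" "j \<le> m" for i j
    using strict_mono_on_less_eq[OF mono] that by simp
  have block: "separated_block n E (f j) (f (Suc j))" if "j < m" for j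
  proof unfold_locales
    show "1 \<le> f j" using le_iff[of 0 j] ends that by simp
    show "f j < f (Suc j)" using strict_mono_on_less[OF mono, of j "Suc j"] that by simp
    show "f (Suc j) \<le> n" using le_iff[of "Suc j" m] ends that by simp
  qed (use sep inner that in auto)
  \<comment> \<open>The auxiliary vertices \<open>Suc n + j\<close> lie outside \<open>{1..n}\<close> and differ between blocks.\<close>
  define good where "good j c \<longleftrightarrow> is_cycle c \<and> f j \<in> set c \<and> f (Suc j) \<in> set c
      \<and> set c \<subseteq> {f j..f (Suc j)} \<union> {Suc n + j}
      \<and> (\<forall>u v. E u v \<longrightarrow> u \<in> {f j..f (Suc j)} \<longrightarrow> v \<in> {f j..f (Suc j)} \<longrightarrow> cycle_adj c u v)"
    for j c
  have "\<exists>c. good j c" if "j < m" for j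
  proof -
    interpret separated_block n E "f j" "f (Suc j)" by (rule block[OF that])
    have "f (Suc j) < Suc n + j" using le_iff[of "Suc j" m] ends that by simp
    then obtain c where "is_cycle c" "set c \<subseteq> {f j..f (Suc j)} \<union> {Suc n + j}"
      "f j \<in> set c" "f (Suc j) \<in> set c"
      "\<And>u v. E u v \<Longrightarrow> u \<in> {f j..f (Suc j)} \<Longrightarrow> v \<in> {f j..f (Suc j)} \<Longrightarrow> cycle_adj c u v"
      by (rule block_cycle) iprover
    then show ?thesis unfolding good_def by blast
  qed
  then obtain c where "\<forall>j. j < m \<longrightarrow> good j (c j)" using choice[of "\<lambda>j c. j < m \<longrightarrow> good j c"] by blast
  then show thesis using that unfolding good_def by blast
qed

end

theorem mainTheorem4:
  fixes n k :: nat and E :: "nat \<Rightarrow> nat \<Rightarrow> bool"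
  assumes "k \<ge> 2" and "n \<ge> 2"
    and "graph_on n E" and "connected_on n E"
    and "\<forall>i\<in>{1..n-1}. card {(u, v). E u v \<and> u \<le> i \<and> i < v} \<le> 2"
    and "card {i\<in>{1..n}. separating E i} = k"
  shows "\<exists>(Z :: nat list list) a b. chain_of_cycles (k - 1) Z a b
           \<and> subgraph_of_chain n E (k - 1) Z a b"
proof -
  interpret cutwidth_two n E
    using assms(2-5) by unfold_locales (simp_all add: crossing_def)
  obtain m where k: "k = Suc m" and m: "0 < m" using assms(1) by (intro that[of "k - 1"]) auto
  obtain f where f: "strict_mono_on {..m} f" "f 0 = 1" "f m = n"
    "\<And>j. j \<le> m \<Longrightarrow> separating E (f j)"
    "\<And>j i. j < m \<Longrightarrow> f j < i \<Longrightarrow> i < f (Suc j) \<Longrightarrow> \<not> separating E i"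
    using separating_enumeration[OF graph _ assms(6)[unfolded k]] two_le_n by auto
  obtain c where c:
    "\<And>j. j < m \<Longrightarrow> is_cycle (c j) \<and> f j \<in> set (c j) \<and> f (Suc j) \<in> set (c j)
           \<and> set (c j) \<subseteq> {f j..f (Suc j)} \<union> {Suc n + j}"
    "\<And>j u v. j < m \<Longrightarrow> E u v \<Longrightarrow> u \<in> {f j..f (Suc j)} \<Longrightarrow> v \<in> {f j..f (Suc j)}
           \<Longrightarrow> cycle_adj (c j) u v"
    using block_cycles[of m f] f by metis
  have "chain_of_cycles m (map c [0..<m]) f (f \<circ> Suc)"
    by (rule chain_of_block_cycles[OF f(1) _ c(1)]) (simp add: f(3))
  moreover have "subgraph_of_chain n E m (map c [0..<m]) f (f \<circ> Suc)"
    by (rule subgraph_of_block_cycles[OF graph f(1) m f(2,3) f(4) c(2)])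
  ultimately show ?thesis unfolding k by auto
qed

end
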